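(* Let $\Sigma_1\subset E(1,1)$ be a regular surface. At every non-characteristic point of $\Sigma_1$, the Riemannian mean curvature $\mathcal H_L$ of $\Sigma_1$ in $(E(1,1),g_L)$ satisfies $$\lim_{L\to+\infty}\mathcal H_L=X_1(\bar p)+X_2(\bar q).$$
   Context: $E(1,1)$ is modelled on $\mathbb R^3$ with coordinates $(x_1,x_2,x_3)$ and vector fields $X_1=\partial_{x_3}$, $X_2=\frac{1}{\sqrt2}(-e^{x_3}\partial_{x_1}+e^{-x_3}\partial_{x_2})$, $X_3=-\frac1{\sqrt2}(e^{x_3}\partial_{x_1}+e^{-x_3}\partial_{x_2})$, dual forms $\omega_1=dx_3$, $\omega_2=\frac1{\sqrt2}(-e^{-x_3}dx_1+e^{x_3}dx_2)$, $\omega=-\frac1{\sqrt2}(e^{-x_3}dx_1+e^{x_3}dx_2)$. For $L>0$, $g_L=\omega_1\otimes\omega_1+\omega_2\otimes\omega_2+L\,\omega\otimes\omega$ (so $X_1,X_2,\widetilde X_3:=L^{-1/2}X_3$ is orthonormal), $\nabla^L$ its Levi-Civita connection. A regular surface is a Euclidean $C^2$-smooth compact oriented surface $\Sigma_1=\{u=0\}$ with $u$ Euclidean $C^2$ and nonvanishing Euclidean gradient. Put $p=X_1u$, $q=X_2u$, $r=\widetilde X_3u$, $l=\sqrt{p^2+q^2}$, $l_L=\sqrt{p^2+q^2+r^2}$, $\bar p=p/l$, $\bar q=q/l$, $\bar p_L=p/l_L$, $\bar q_L=q/l_L$, $\bar r_L=r/l_L$; non-characteristic means $l\ne0$. There $v_L=\bar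 p_LX_1+\bar q_LX_2+\bar r_L\widetilde X_3$ is the unit normal, $e_1=\bar qX_1-\bar pX_2$, $e_2=\bar r_L\bar pX_1+\bar r_L\bar qX_2-\frac l{l_L}\widetilde X_3$ an orthonormal tangent frame, and $\mathcal H_L=\langle\nabla^L_{e_1}v_L,e_1\rangle_L+\langle\nabla^L_{e_2}v_L,e_2\rangle_L$. *)

theory Defs
  imports "HOL-Analysis.Analysis"
begin

text \<open>The Lie group E(1,1) modelled on real^3, coordinates x$1, x$2, x$3.\<close>

type_synonym pt = "real ^ 3"

definition vec3 :: "real \<Rightarrow> real \<Rightarrow> real \<Rightarrow> pt" where
  "vec3 a b c = (\<chi> i. if i = 1 then a else if i = 2 then b else c)"

text \<open>Left-invariant vector fields, as coordinate vectors at each point.\<close>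
definition X1 :: "pt \<Rightarrow> pt" where "X1 x = vec3 0 0 1"
definition X2 :: "pt \<Rightarrow> pt" where
  "X2 x = vec3 (- exp (x$3) / sqrt 2) (exp (- x$3) / sqrt 2) 0"
definition X3 :: "pt \<Rightarrow> pt" where
  "X3 x = vec3 (- exp (x$3) / sqrt 2) (- exp (- x$3) / sqrt 2) 0"
definition X3t :: "real \<Rightarrow> pt \<Rightarrow> pt" where
  "X3t L x = (1 / sqrt L) *\<^sub>R X3 x"

definition om1 :: "pt \<Rightarrow> pt \<Rightarrow> real" where "om1 x v = v$3"
definition om2 :: "pt \<Rightarrow> pt \<Rightarrow> real" where
  "om2 x v = (- exp (- x$3) * v$1 + exp (x$3) * v$2) / sqrt 2"
definition om :: "pt \<Rightarrow> pt \<Rightarrow> real" where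
  "om x v = - (exp (- x$3) * v$1 + exp (x$3) * v$2) / sqrt 2"

definition gL :: "real \<Rightarrow> pt \<Rightarrow> pt \<Rightarrow> pt \<Rightarrow> real" where
  "gL L x v w = om1 x v * om1 x w + om2 x v * om2 x w + L * om x v * om x w"

definition gmat :: "real \<Rightarrow> pt \<Rightarrow> real ^ 3 ^ 3" where
  "gmat L x = (\<chi> i j. gL L x (axis i 1) (axis j 1))"

definition ginv :: "real \<Rightarrow> pt \<Rightarrow> real ^ 3 ^ 3" where
  "ginv L x = matrix_inv (gmat L x)"

definition dd :: "(pt \<Rightarrow> 'b::real_normed_vector) \<Rightarrow> pt \<Rightarrow> pt \<Rightarrow> 'b" where
  "dd f x v = frechet_derivative f (at x) v"

definition Christoffel :: "real \<Rightarrow> pt \<Rightarrow> 3 \<Rightarrow> 3 \<Rightarrow> 3 \<Rightarrow> real" where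
  "Christoffel L x k i j =
     (\<Sum>l\<in>UNIV. (1/2) * ginv L x $ k $ l *
        (dd (\<lambda>y. gmat L y $ j $ l) x (axis i 1)
       + dd (\<lambda>y. gmat L y $ i $ l) x (axis j 1)
       - dd (\<lambda>y. gmat L y $ i $ j) x (axis l 1)))"

definition nablaL :: "real \<Rightarrow> (pt \<Rightarrow> pt) \<Rightarrow> (pt \<Rightarrow> pt) \<Rightarrow> pt \<Rightarrow> pt" where
  "nablaL L Y Z x = dd Z x (Y x)
     + (\<chi> k. \<Sum>i\<in>UNIV. \<Sum>j\<in>UNIV. Christoffel L x k i j * (Y x)$i * (Z x)$j)"

definition C2 :: "(pt \<Rightarrow> real) \<Rightarrow> bool" where
  "C2 u \<longleftrightarrow> (\<exists>G M. (\<forall>x. (u has_derivative (\<lambda>h. G x \<bullet> h)) (at x))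
                  \<and> (\<forall>x. (G has_derivative (\<lambda>h. M x *v h)) (at x))
                  \<and> continuous_on UNIV M)"

definition regular_surface_fn :: "(pt \<Rightarrow> real) \<Rightarrow> bool" where
  "regular_surface_fn u \<longleftrightarrow> C2 u \<and> compact {x. u x = 0}
     \<and> (\<forall>x. u x = 0 \<longrightarrow> frechet_derivative u (at x) \<noteq> (\<lambda>h. 0))"

definition pp :: "(pt \<Rightarrow> real) \<Rightarrow> pt \<Rightarrow> real" where "pp u x = dd u x (X1 x)"
definition qq :: "(pt \<Rightarrow> real) \<Rightarrow> pt \<Rightarrow> real" where "qq u x = dd u x (X2 x)"
definition rr :: "real \<Rightarrow> (pt \<Rightarrow> real) \<Rightarrow> pt \<Rightarrow> real" where "rr L u x = dd u x (X3t L x)"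
definition ll :: "(pt \<Rightarrow> real) \<Rightarrow> pt \<Rightarrow> real" where
  "ll u x = sqrt ((pp u x)\<^sup>2 + (qq u x)\<^sup>2)"
definition lL :: "real \<Rightarrow> (pt \<Rightarrow> real) \<Rightarrow> pt \<Rightarrow> real" where
  "lL L u x = sqrt ((pp u x)\<^sup>2 + (qq u x)\<^sup>2 + (rr L u x)\<^sup>2)"
definition pbar :: "(pt \<Rightarrow> real) \<Rightarrow> pt \<Rightarrow> real" where "pbar u x = pp u x / ll u x"
definition qbar :: "(pt \<Rightarrow> real) \<Rightarrow> pt \<Rightarrow> real" where "qbar u x = qq u x / ll u x"
definition pbarL :: "real \<Rightarrow> (pt \<Rightarrow> real) \<Rightarrow> pt \<Rightarrow> real" where "pbarL L u x = pp u x / lL L u x"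
definition qbarL :: "real \<Rightarrow> (pt \<Rightarrow> real) \<Rightarrow> pt \<Rightarrow> real" where "qbarL L u x = qq u x / lL L u x"
definition rbarL :: "real \<Rightarrow> (pt \<Rightarrow> real) \<Rightarrow> pt \<Rightarrow> real" where "rbarL L u x = rr L u x / lL L u x"

text \<open>Unit normal and orthonormal tangent frame.\<close>
definition nuL :: "real \<Rightarrow> (pt \<Rightarrow> real) \<Rightarrow> pt \<Rightarrow> pt" where
  "nuL L u x = pbarL L u x *\<^sub>R X1 x + qbarL L u x *\<^sub>R X2 x + rbarL L u x *\<^sub>R X3t L x"
definition e1 :: "(pt \<Rightarrow> real) \<Rightarrow> pt \<Rightarrow> pt" where
  "e1 u x = qbar u x *\<^sub>R X1 x - pbar u x *\<^sub>R X2 x"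
definition e2 :: "real \<Rightarrow> (pt \<Rightarrow> real) \<Rightarrow> pt \<Rightarrow> pt" where
  "e2 L u x = (rbarL L u x * pbar u x) *\<^sub>R X1 x + (rbarL L u x * qbar u x) *\<^sub>R X2 x
              - (ll u x / lL L u x) *\<^sub>R X3t L x"

definition HL :: "real \<Rightarrow> (pt \<Rightarrow> real) \<Rightarrow> pt \<Rightarrow> real" where
  "HL L u x = gL L x (nablaL L (e1 u) (nuL L u) x) (e1 u x)
            + gL L x (nablaL L (e2 L u) (nuL L u) x) (e2 L u x)"

end

theory Submission
  imports Defs
begin

(* In the frame X1, X2, X3 the metric g_L is diag(1, 1, L) and its coefficients depend on x3
   only, so the Levi-Civita connection is the coordinate derivative plus a Koszul correction
   by the x3-derivative of g_L.  Put s = L^(-1/2) and R = X3 u.  Then the unit normal is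
   (p X1 + q X2 + s^2 R X3) / l_s with l_s = sqrt (p^2 + q^2 + s^2 R^2), and every coefficient
   of e2 is O(s).  The O(L) contributions to <nabla_e2 nu, e2> cancel, because the horizontal
   parts of e2 and nu are parallel; afterwards both terms of H_L are continuous in s at s = 0.
   At s = 0 the e2-term vanishes and the e1-term is qbar e1(pbar) - pbar e1(qbar), which equals
   X1 pbar + X2 qbar since pbar^2 + qbar^2 = 1. *)

lemma vec3_nth [simp]: "vec3 a b c $ 1 = a" "vec3 a b c $ 2 = b" "vec3 a b c $ 3 = c"
  by (simp_all add: vec3_def)

definition frame_vec :: "real \<Rightarrow> real \<Rightarrow> real \<Rightarrow> pt \<Rightarrow> pt" where
  "frame_vec c1 c2 c3 y = c1 *\<^sub>R X1 y + c2 *\<^sub>R X2 y + c3 *\<^sub>R X3 y"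

lemma frame_vec_nth3 [simp]: "frame_vec c1 c2 c3 y $ 3 = c1"
  by (simp add: frame_vec_def X1_def X2_def X3_def)

lemma sqrt2_mult_self [simp]: "sqrt 2 * sqrt 2 = (2::real)" "sqrt 2 * (sqrt 2 * z) = (2::real) * z"
  by (simp_all add: mult.assoc[symmetric])

lemma gL_frame_vec: "gL L y (frame_vec c1 c2 c3 y) (frame_vec d1 d2 d3 y) = c1*d1 + c2*d2 + L*c3*d3"
  unfolding gL_def om1_def om2_def om_def frame_vec_def X1_def X2_def X3_def
  by (simp add: field_simps power2_eq_square exp_minus)

definition dgL :: "real \<Rightarrow> pt \<Rightarrow> pt \<Rightarrow> pt \<Rightarrow> real" where
  "dgL L y v w = (1 + L) * ((exp (y$3))\<^sup>2 * v$2 * w$2 - v$1 * w$1 / (exp (y$3))\<^sup>2)"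

lemma dgL_frame_vec: "dgL L y (frame_vec c1 c2 c3 y) (frame_vec d1 d2 d3 y) = - (1 + L) * (c2*d3 + c3*d2)"
  unfolding dgL_def frame_vec_def X1_def X2_def X3_def
  by (simp add: field_simps power2_eq_square exp_minus)

lemma dgL_commute: "dgL L y v w = dgL L y w v"
  unfolding dgL_def by (simp add: algebra_simps)

lemma has_derivative_vec_nth [derivative_intros]: "((\<lambda>y::pt. y$i) has_derivative (\<lambda>h. h$i)) F"
  by (rule bounded_linear_imp_has_derivative[OF bounded_linear_vec_nth])

lemma gL_has_derivative: "((\<lambda>y. gL L y v w) has_derivative (\<lambda>h. h$3 * dgL L y0 v w)) (at y0)"
  unfolding gL_def om1_def om2_def om_def
  apply (rule derivative_eq_intros refl | simp)+
  apply (rule ext, simp add: dgL_def field_simps exp_minus power2_eq_square)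
  done

lemma dd_gmat: "dd (\<lambda>y. gmat L y $ i $ j) x h = h$3 * dgL L x (axis i 1) (axis j 1)"
  unfolding dd_def gmat_def vec_lambda_beta
  by (metis frechet_derivative_at[OF gL_has_derivative])

lemma det_gmat: "det (gmat L x) = L"
  unfolding det_3 gmat_def gL_def om1_def om2_def om_def
  by (simp add: axis_def field_simps power2_eq_square exp_minus)

lemma gL_eq_inner_gmat: "gL L x v w = v \<bullet> (gmat L x *v w)"
  unfolding gmat_def gL_def om1_def om2_def om_def inner_vec_def matrix_vector_mult_def sum_3
  by (simp add: axis_def field_simps)

lemma transpose_gmat: "transpose (gmat L x) = gmat L x"
  unfolding gmat_def transpose_def gL_def by (simp add: vec_eq_iff mult.commute)

lemma gmat_ginv: assumes "L \<noteq> 0" shows "gmat L x ** ginv L x = mat 1"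
proof -
  have "invertible (gmat L x)" using assms by (simp add: invertible_det_nz det_gmat)
  then have "\<exists>A'. gmat L x ** A' = mat 1 \<and> A' ** gmat L x = mat 1"
    by (simp add: invertible_def)
  then show ?thesis unfolding ginv_def matrix_inv_def by (metis (mono_tags, lifting) someI_ex)
qed

lemma gL_add_left: "gL L x (a + b) w = gL L x a w + gL L x b w"
  unfolding gL_def om1_def om2_def om_def by (simp add: field_simps)

lemma gL_nablaL:
  assumes "L \<noteq> 0"
  shows "gL L x (nablaL L Y Z x) W = gL L x (dd Z x (Y x)) W
     + (Y x $ 3 * dgL L x (Z x) W + Z x $ 3 * dgL L x (Y x) W - W $ 3 * dgL L x (Y x) (Z x)) / 2"
proof -
  define T where "T = (\<chi> l. \<Sum>i\<in>UNIV. \<Sum>j\<in>UNIV. (1/2) * (dd (\<lambda>y. gmat L y $ j $ l) x (axis i 1)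
       + dd (\<lambda>y. gmat L y $ i $ l) x (axis j 1)
       - dd (\<lambda>y. gmat L y $ i $ j) x (axis l 1)) * Y x $ i * Z x $ j)"
  have Gamma: "(\<chi> k. \<Sum>i\<in>UNIV. \<Sum>j\<in>UNIV. Christoffel L x k i j * Y x $ i * Z x $ j) = ginv L x *v T"
    unfolding Christoffel_def T_def matrix_vector_mult_def vec_eq_iff sum_3
    by (simp add: algebra_simps)
  have "gL L x (ginv L x *v T) W = (gmat L x *v (ginv L x *v T)) \<bullet> W"
    by (metis gL_eq_inner_gmat dot_lmul_matrix transpose_gmat transpose_matrix_vector inner_commute)
  also have "\<dots> = T \<bullet> W"
    by (simp add: matrix_vector_mul_assoc gmat_ginv[OF assms])
  also have "\<dots> = (Y x $ 3 * dgL L x (Z x) W + Z x $ 3 * dgL L x (Y x) W - W $ 3 * dgL L x (Y x) (Z x)) / 2"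
    unfolding T_def inner_vec_def sum_3 dd_gmat dgL_def
    by (simp add: axis_def field_simps)
  finally show ?thesis
    unfolding nablaL_def gL_add_left Gamma by simp
qed

lemma X1_has_derivative: "(X1 has_derivative (\<lambda>h. 0)) (at y)"
  unfolding X1_def[abs_def] by (rule has_derivative_const)

lemma X2_has_derivative: "(X2 has_derivative (\<lambda>h. h$3 *\<^sub>R X3 y)) (at y)"
proof -
  have X2_eq: "X2 = (\<lambda>y. (- exp (y$3) / sqrt 2) *\<^sub>R vec3 1 0 0 + (exp (- y$3) / sqrt 2) *\<^sub>R vec3 0 1 0)"
    by (rule ext) (simp add: X2_def vec_eq_iff forall_3)
  show ?thesis
    unfolding X2_eq by (auto intro!: derivative_eq_intros simp: X3_def fun_eq_iff vec_eq_iff forall_3 field_simps)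
qed

lemma X3_has_derivative: "(X3 has_derivative (\<lambda>h. h$3 *\<^sub>R X2 y)) (at y)"
proof -
  have X3_eq: "X3 = (\<lambda>y. (- exp (y$3) / sqrt 2) *\<^sub>R vec3 1 0 0 + (- exp (- y$3) / sqrt 2) *\<^sub>R vec3 0 1 0)"
    by (rule ext) (simp add: X3_def vec_eq_iff forall_3)
  show ?thesis
    unfolding X3_eq by (auto intro!: derivative_eq_intros simp: X2_def fun_eq_iff vec_eq_iff forall_3 field_simps)
qed

lemma frame_field_has_derivative:
  assumes "(n1 has_derivative n1') (at x)" "(n2 has_derivative n2') (at x)" "(n3 has_derivative n3') (at x)"
  shows "((\<lambda>y. frame_vec (n1 y) (n2 y) (n3 y) y) has_derivative
           (\<lambda>h. frame_vec (n1' h) (n2' h + n3 x * h$3) (n3' h + n2 x * h$3) x)) (at x)"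
  unfolding frame_vec_def
  by (rule derivative_eq_intros assms X1_has_derivative X2_has_derivative X3_has_derivative refl)+
     (simp add: algebra_simps)

lemma gL_nablaL_frame_field:
  assumes "L \<noteq> 0"
    and "(n1 has_derivative n1') (at x)" "(n2 has_derivative n2') (at x)" "(n3 has_derivative n3') (at x)"
    and E: "E x = frame_vec k1 k2 k3 x"
  shows "gL L x (nablaL L E (\<lambda>y. frame_vec (n1 y) (n2 y) (n3 y) y) x) (E x)
    = k1 * n1' (E x) + k2 * (n2' (E x) + n3 x * k1) + L * k3 * (n3' (E x) + n2 x * k1)
      - (1 + L) * n1 x * k2 * k3"
proof -
  have "dd (\<lambda>y. frame_vec (n1 y) (n2 y) (n3 y) y) x (E x)
      = frame_vec (n1' (E x)) (n2' (E x) + n3 x * k1) (n3' (E x) + n2 x * k1) x"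
    unfolding dd_def frechet_derivative_at[OF frame_field_has_derivative[OF assms(2-4)], symmetric]
    by (simp add: E)
  then show ?thesis
    unfolding gL_nablaL[OF assms(1)]
    by (simp add: E gL_frame_vec dgL_frame_vec dgL_commute[of L x "frame_vec k1 k2 k3 x"] field_simps)
qed

lemma C2_differentiable: "C2 u \<Longrightarrow> u differentiable (at y)"
  unfolding C2_def differentiable_def by blast

lemma dd_has_derivative: "f differentiable (at x) \<Longrightarrow> (f has_derivative dd f x) (at x)"
  unfolding dd_def by (simp add: frechet_derivative_works)

lemma dd_frame_vec:
  fixes f :: "pt \<Rightarrow> real"
  assumes "f differentiable (at x)"
  shows "dd f x (frame_vec k1 k2 k3 x) = k1 * dd f x (X1 x) + k2 * dd f x (X2 x) + k3 * dd f x (X3 x)"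
proof -
  interpret linear "dd f x"
    using assms unfolding dd_def by (rule linear_frechet_derivative)
  show ?thesis unfolding frame_vec_def by (simp add: add scale)
qed

lemma C2_dd_field_differentiable:
  assumes "C2 u" and "V differentiable (at x)"
  shows "(\<lambda>y. dd u y (V y)) differentiable (at x)"
proof -
  obtain G M where uG: "\<And>y. (u has_derivative (\<lambda>h. G y \<bullet> h)) (at y)"
      and GM: "\<And>y. (G has_derivative (\<lambda>h. M y *v h)) (at y)"
    using assms(1) unfolding C2_def by blast
  have "(\<lambda>y. dd u y (V y)) = (\<lambda>y. G y \<bullet> V y)"
    unfolding dd_def by (metis frechet_derivative_at[OF uG])
  moreover have "G differentiable (at x)"
    using GM unfolding differentiable_def by blast
  ultimately show ?thesis using assms(2) by simp
qed

lemma X1_differentiable: "X1 differentiable (at y)"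
  using X1_has_derivative unfolding differentiable_def by blast

lemma X2_differentiable: "X2 differentiable (at y)"
  using X2_has_derivative unfolding differentiable_def by blast

lemma X3_differentiable: "X3 differentiable (at y)"
  using X3_has_derivative unfolding differentiable_def by blast

lemma C2_pp_differentiable: "C2 u \<Longrightarrow> pp u differentiable (at x)"
  unfolding pp_def[abs_def] by (rule C2_dd_field_differentiable[OF _ X1_differentiable])

lemma C2_qq_differentiable: "C2 u \<Longrightarrow> qq u differentiable (at x)"
  unfolding qq_def[abs_def] by (rule C2_dd_field_differentiable[OF _ X2_differentiable])

lemma C2_rr_differentiable: "C2 u \<Longrightarrow> rr 1 u differentiable (at x)"
  unfolding rr_def[abs_def] X3t_def by (simp add: C2_dd_field_differentiable[OF _ X3_differentiable])

lemma C2_rr_eq_div_sqrt: "C2 u \<Longrightarrow> rr L u y = rr 1 u y / sqrt L"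
proof -
  assume "C2 u"
  then interpret linear "dd u y"
    unfolding dd_def by (intro linear_frechet_derivative C2_differentiable)
  show ?thesis unfolding rr_def X3t_def by (simp add: scale)
qed

definition lS :: "real \<Rightarrow> (pt \<Rightarrow> real) \<Rightarrow> pt \<Rightarrow> real" where
  "lS s u y = sqrt ((pp u y)\<^sup>2 + (qq u y)\<^sup>2 + (s * rr 1 u y)\<^sup>2)"

lemma ll_eq_lS: "ll u = lS 0 u"
  by (simp add: fun_eq_iff ll_def lS_def)

lemma lL_eq_lS: "C2 u \<Longrightarrow> s > 0 \<Longrightarrow> lL (1 / s\<^sup>2) u = lS s u"
  by (simp add: fun_eq_iff lL_def lS_def C2_rr_eq_div_sqrt[of u "1 / s\<^sup>2"] real_sqrt_divide mult.commute)

lemma ll_le_lS: "ll u y \<le> lS s u y"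
  unfolding ll_def lS_def by simp

lemma has_derivative_div_lS:
  assumes "C2 u" and "F differentiable (at x)" and "lS s u x > 0"
  shows "((\<lambda>y. F y / lS s u y) has_derivative (\<lambda>h. dd F x h / lS s u x
     - F x * (pp u x * dd (pp u) x h + qq u x * dd (qq u) x h + s\<^sup>2 * rr 1 u x * dd (rr 1 u) x h)
       / lS s u x ^ 3)) (at x)"
proof -
  have pos: "(pp u x)\<^sup>2 + (qq u x)\<^sup>2 + (s * rr 1 u x)\<^sup>2 > 0"
    using assms(3) unfolding lS_def by simp
  then have ne: "sqrt ((pp u x)\<^sup>2 + (qq u x)\<^sup>2 + (s * rr 1 u x)\<^sup>2) \<noteq> 0" by simp
  note D = dd_has_derivative[OF assms(2)] dd_has_derivative[OF C2_pp_differentiable[OF assms(1)]]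
    dd_has_derivative[OF C2_qq_differentiable[OF assms(1)]] dd_has_derivative[OF C2_rr_differentiable[OF assms(1)]]
  show ?thesis
    unfolding lS_def[abs_def]
    apply (rule derivative_eq_intros D refl pos ne)+
    apply (rule ext, fold lS_def)
    using assms(3) by (simp add: field_simps power2_eq_square power3_eq_cube)
qed

lemma differentiable_div_lS:
  "C2 u \<Longrightarrow> F differentiable (at x) \<Longrightarrow> lS s u x > 0 \<Longrightarrow> (\<lambda>y. F y / lS s u y) differentiable (at x)"
  using has_derivative_div_lS unfolding differentiable_def by blast

lemma lS_pos:
  assumes "ll u x \<noteq> 0"
  shows "lS s u x > 0"
proof -
  have "0 \<le> ll u x" unfolding ll_def by simp
  with assms show ?thesis using ll_le_lS[of u x s] by linarith
qed

lemma isCont_lS: "isCont (\<lambda>s. lS s u x) s0"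
  unfolding lS_def by (intro continuous_intros)

lemma isCont_dd_div_lS:
  assumes "C2 u" and "F differentiable (at x)" and "ll u x \<noteq> 0" and "isCont h 0"
  shows "isCont (\<lambda>s. dd (\<lambda>y. F y / lS s u y) x (h s)) 0"
proof -
  have dd_isCont: "isCont (\<lambda>s. dd f x (h s)) 0" if "f differentiable (at x)" for f :: "pt \<Rightarrow> real"
    using has_derivative_bounded_linear[OF dd_has_derivative[OF that]] assms(4)
    by (rule bounded_linear.continuous)
  note cont = dd_isCont[OF assms(2)] dd_isCont[OF C2_pp_differentiable[OF assms(1)]]
    dd_isCont[OF C2_qq_differentiable[OF assms(1)]] dd_isCont[OF C2_rr_differentiable[OF assms(1)]]
  have "isCont (\<lambda>s. dd F x (h s) / lS s u x
     - F x * (pp u x * dd (pp u) x (h s) + qq u x * dd (qq u) x (h s) + s\<^sup>2 * rr 1 u x * dd (rr 1 u) x (h s))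
       / lS s u x ^ 3) 0"
    using lS_pos[OF assms(3), of 0] by (intro continuous_intros isCont_lS cont) auto
  then show ?thesis
    unfolding dd_def frechet_derivative_at[OF has_derivative_div_lS[OF assms(1,2) lS_pos[OF assms(3)]], symmetric]
    by simp
qed

lemma pbar_eq_div_lS: "pbar u = (\<lambda>y. pp u y / lS 0 u y)"
  by (simp add: fun_eq_iff pbar_def ll_eq_lS)

lemma qbar_eq_div_lS: "qbar u = (\<lambda>y. qq u y / lS 0 u y)"
  by (simp add: fun_eq_iff qbar_def ll_eq_lS)

lemma pbar_sq_add_qbar_sq: "ll u x \<noteq> 0 \<Longrightarrow> (pbar u x)\<^sup>2 + (qbar u x)\<^sup>2 = 1"
  unfolding pbar_def qbar_def ll_def by (simp add: power_divide add_divide_distrib[symmetric])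

lemma pbar_dd_pbar_add_qbar_dd_qbar:
  assumes "C2 u" and "ll u x \<noteq> 0"
  shows "pbar u x * dd (pbar u) x h + qbar u x * dd (qbar u) x h = 0"
proof -
  define l where "l = lS 0 u x"
  have l_pos: "l > 0" unfolding l_def by (rule lS_pos[OF assms(2)])
  have l_sq: "l\<^sup>2 = (pp u x)\<^sup>2 + (qq u x)\<^sup>2" unfolding l_def lS_def by simp
  have dd_div: "dd (\<lambda>y. F y / lS 0 u y) x h
      = dd F x h / l - F x * (pp u x * dd (pp u) x h + qq u x * dd (qq u) x h) / l ^ 3"
    if "F differentiable (at x)" for F
    unfolding dd_def frechet_derivative_at[OF has_derivative_div_lS[OF assms(1) that lS_pos[OF assms(2)]], symmetric]
    by (simp add: l_def)
  have "pbar u x * dd (pbar u) x h + qbar u x * dd (qbar u) x h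
      = (pp u x * dd (pp u) x h + qq u x * dd (qq u) x h) / l\<^sup>2
        * (1 - ((pp u x)\<^sup>2 + (qq u x)\<^sup>2) / l\<^sup>2)"
    unfolding pbar_eq_div_lS qbar_eq_div_lS l_def[symmetric]
      dd_div[OF C2_pp_differentiable[OF assms(1)]] dd_div[OF C2_qq_differentiable[OF assms(1)]]
    using l_pos by (simp add: field_simps power2_eq_square power3_eq_cube)
  then show ?thesis using l_pos by (simp add: l_sq[symmetric])
qed

lemma e1_frame_vec: "e1 u x = frame_vec (qbar u x) (- pbar u x) 0 x"
  by (simp add: e1_def frame_vec_def)

locale noncharacteristic_point =
  fixes u :: "pt \<Rightarrow> real" and x :: pt
  assumes C2: "C2 u" and noncharacteristic: "ll u x \<noteq> 0"
begin

definition nu1 :: "real \<Rightarrow> pt \<Rightarrow> real" where "nu1 s = (\<lambda>y. pp u y / lS s u y)"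
definition nu2 :: "real \<Rightarrow> pt \<Rightarrow> real" where "nu2 s = (\<lambda>y. qq u y / lS s u y)"
definition rho :: "real \<Rightarrow> pt \<Rightarrow> real" where "rho s = (\<lambda>y. rr 1 u y / lS s u y)"

definition k1 :: "real \<Rightarrow> real" where "k1 s = s * rho s x * pbar u x"
definition k2 :: "real \<Rightarrow> real" where "k2 s = s * rho s x * qbar u x"
definition k3 :: "real \<Rightarrow> real" where "k3 s = - s * ll u x / lS s u x"
definition E2 :: "real \<Rightarrow> pt" where "E2 s = frame_vec (k1 s) (k2 s) (k3 s) x"

lemma nuL_frame_vec:
  assumes "s > 0"
  shows "nuL (1 / s\<^sup>2) u = (\<lambda>y. frame_vec (nu1 s y) (nu2 s y) (s\<^sup>2 * rho s y) y)"
proof -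
  have "sqrt (1 / s\<^sup>2) = 1 / s" using assms by (simp add: real_sqrt_divide)
  then show ?thesis
    unfolding nuL_def pbarL_def qbarL_def rbarL_def lL_eq_lS[OF C2 assms] C2_rr_eq_div_sqrt[OF C2, of "1 / s\<^sup>2"]
      X3t_def frame_vec_def nu1_def nu2_def rho_def
    by (simp add: fun_eq_iff power2_eq_square)
qed

lemma e2_frame_vec: "s > 0 \<Longrightarrow> e2 (1 / s\<^sup>2) u x = E2 s"
  unfolding e2_def rbarL_def lL_eq_lS[OF C2] C2_rr_eq_div_sqrt[OF C2, of "1 / s\<^sup>2"] X3t_def
    E2_def frame_vec_def k1_def k2_def k3_def rho_def
  by (simp add: real_sqrt_divide algebra_simps)

lemma nu_differentiable:
  "nu1 s differentiable (at x)" "nu2 s differentiable (at x)" "rho s differentiable (at x)"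
  unfolding nu1_def nu2_def rho_def
  by (intro differentiable_div_lS C2 lS_pos noncharacteristic
      C2_pp_differentiable C2_qq_differentiable C2_rr_differentiable)+

definition e1_term :: "real \<Rightarrow> real" where
  "e1_term s = qbar u x * dd (nu1 s) x (e1 u x)
     - pbar u x * (dd (nu2 s) x (e1 u x) + s\<^sup>2 * rho s x * qbar u x)"

definition e2_term :: "real \<Rightarrow> real" where
  "e2_term s = k1 s * dd (nu1 s) x (E2 s) + k2 s * dd (nu2 s) x (E2 s) + s\<^sup>2 * rho s x * k1 s * k2 s
     + k3 s * dd (rho s) x (E2 s) - nu1 s x * k2 s * k3 s"

lemma HL_eq:
  assumes "s > 0"
  shows "HL (1 / s\<^sup>2) u x = e1_term s + e2_term s"
proof -
  have L_nonzero: "1 / s\<^sup>2 \<noteq> 0" using assms by simp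
  note nu_has_derivative = dd_has_derivative[OF nu_differentiable(1)] dd_has_derivative[OF nu_differentiable(2)]
    has_derivative_mult_right[OF dd_has_derivative[OF nu_differentiable(3)], of "s\<^sup>2"]
  note frame_term = gL_nablaL_frame_field[OF L_nonzero nu_has_derivative]
  \<comment> \<open>the cancellation of the terms of order L\<close>
  have "nu2 s x * k1 s = nu1 s x * k2 s"
    unfolding nu1_def nu2_def k1_def k2_def pbar_def qbar_def by simp
  then have "(1 / s\<^sup>2) * k3 s * (s\<^sup>2 * dd (rho s) x (E2 s) + nu2 s x * k1 s)
      - (1 + 1 / s\<^sup>2) * nu1 s x * k2 s * k3 s
      = k3 s * dd (rho s) x (E2 s) - nu1 s x * k2 s * k3 s"
    using assms by (simp add: field_simps)
  then show ?thesis
    unfolding HL_def nuL_frame_vec[OF assms]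
    unfolding frame_term[of "e1 u", OF e1_frame_vec] frame_term[of "e2 (1 / s\<^sup>2) u", OF e2_frame_vec[OF assms, unfolded E2_def]]
    by (simp add: e1_term_def e2_term_def E2_def[symmetric] e2_frame_vec[OF assms] algebra_simps)
qed

lemma isCont_dd_nu:
  assumes "isCont h 0"
  shows "isCont (\<lambda>s. dd (nu1 s) x (h s)) 0" "isCont (\<lambda>s. dd (nu2 s) x (h s)) 0"
    "isCont (\<lambda>s. dd (rho s) x (h s)) 0"
  unfolding nu1_def nu2_def rho_def
  by (intro isCont_dd_div_lS C2 noncharacteristic assms
      C2_pp_differentiable C2_qq_differentiable C2_rr_differentiable)+

lemma lS_nonzero [simp]: "lS s u x \<noteq> 0"
  using lS_pos[OF noncharacteristic] by (metis less_irrefl)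

lemma isCont_nu_at:
  "isCont (\<lambda>s. nu1 s x) s0" "isCont (\<lambda>s. nu2 s x) s0" "isCont (\<lambda>s. rho s x) s0"
  unfolding nu1_def nu2_def rho_def by (auto intro!: continuous_intros isCont_lS)

lemma isCont_E2: "isCont E2 0"
  unfolding E2_def frame_vec_def k1_def[abs_def] k2_def[abs_def] k3_def[abs_def]
  by (auto intro!: continuous_intros isCont_lS isCont_nu_at)

lemma isCont_e1_term: "isCont e1_term 0"
  unfolding e1_term_def
  by (intro continuous_intros isCont_nu_at isCont_dd_nu[where h="\<lambda>_. e1 u x", simplified])

lemma isCont_e2_term: "isCont e2_term 0"
  unfolding e2_term_def k1_def[abs_def] k2_def[abs_def] k3_def[abs_def]
  by (auto intro!: continuous_intros isCont_nu_at isCont_lS isCont_dd_nu[OF isCont_E2])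

lemma e2_term_0: "e2_term 0 = 0"
  by (simp add: e2_term_def k1_def k2_def k3_def)

lemma e1_term_0: "e1_term 0 = dd (pbar u) x (X1 x) + dd (qbar u) x (X2 x)"
proof -
  have nu0: "nu1 0 = pbar u" "nu2 0 = qbar u"
    unfolding nu1_def nu2_def pbar_eq_div_lS qbar_eq_div_lS by simp_all
  note dd_e1 = dd_frame_vec[OF nu_differentiable(1)[of 0, unfolded nu0]]
    dd_frame_vec[OF nu_differentiable(2)[of 0, unfolded nu0]]
  note normal = pbar_dd_pbar_add_qbar_dd_qbar[OF C2 noncharacteristic]
  have "e1_term 0 = (qbar u x)\<^sup>2 * dd (pbar u) x (X1 x) + (pbar u x)\<^sup>2 * dd (qbar u) x (X2 x)
      - pbar u x * qbar u x * (dd (pbar u) x (X2 x) + dd (qbar u) x (X1 x))"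
    unfolding e1_term_def nu0 e1_frame_vec dd_e1 by (simp add: power2_eq_square algebra_simps)
  also have "\<dots> = ((pbar u x)\<^sup>2 + (qbar u x)\<^sup>2) * (dd (pbar u) x (X1 x) + dd (qbar u) x (X2 x))"
    using normal[of "X1 x"] normal[of "X2 x"] by algebra
  finally show ?thesis by (simp add: pbar_sq_add_qbar_sq[OF noncharacteristic])
qed

theorem HL_tendsto: "((\<lambda>L. HL L u x) \<longlongrightarrow> dd (pbar u) x (X1 x) + dd (qbar u) x (X2 x)) at_top"
proof -
  let ?H = "\<lambda>s. e1_term s + e2_term s"
  have "((\<lambda>L. 1 / sqrt L) \<longlongrightarrow> 0) at_top"
    by (rule tendsto_divide_0[OF tendsto_const filterlim_at_top_imp_at_infinity[OF sqrt_at_top]])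
  then have "((\<lambda>L. ?H (1 / sqrt L)) \<longlongrightarrow> ?H 0) at_top"
    by (intro isCont_tendsto_compose[of 0 ?H] continuous_intros isCont_e1_term isCont_e2_term)
  moreover have "eventually (\<lambda>L. ?H (1 / sqrt L) = HL L u x) at_top"
    using eventually_gt_at_top[of 0]
    by eventually_elim (simp add: HL_eq[symmetric] real_sqrt_divide power_divide)
  ultimately show ?thesis
    by (simp add: tendsto_cong e1_term_0 e2_term_0)
qed

end

theorem proposition6p4:
  fixes u :: "real ^ 3 \<Rightarrow> real" and x :: "real ^ 3"
  assumes "regular_surface_fn u"
    and "u x = 0"
    and "ll u x \<noteq> 0"
  shows "((\<lambda>L. HL L u x) \<longlongrightarrow> dd (pbar u) x (X1 x) + dd (qbar u) x (X2 x)) at_top"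
proof -
  interpret noncharacteristic_point u x
    using assms(1,3) by unfold_locales (simp_all add: regular_surface_fn_def)
  show ?thesis by (rule HL_tendsto)
qed

end
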